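(* Let $G$ be a finite simple graph on $n$ vertices with at least one edge, let $\lambda_1$ and $\lambda_n$ be the largest and smallest eigenvalues of its (0/1) adjacency matrix, let $P_{\lambda_1}$ be the orthogonal projection onto the $\lambda_1$-eigenspace, and put $p=\langle\boldsymbol 1,P_{\lambda_1}\boldsymbol 1\rangle$. If $\frac{-\lambda_n(n-p)}{\lambda_1 p}\le 1$, then $$\vartheta(G)\le\frac{-n\lambda_n}{\lambda_1-\lambda_n}\cdot\frac{p}{n}\left(1+\sqrt{\frac{\lambda_1(n-p)}{-\lambda_n\,p}}\right)^2.$$
   Context: $\boldsymbol 1$ is the all-ones vector and $\langle\cdot,\cdot\rangle$ the standard inner product. $\vartheta(G)$ is the Lovász theta function, $\vartheta(G)=\inf_B\lambda_{\max}(B)$ over real symmetric $B$ with $B_{ij}=1$ whenever $i=j$ or $i,j$ are non-adjacent. *)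

theory Defs
  imports "HOL-Analysis.Analysis"
begin

text \<open>Simple graphs on the finite vertex type 'n: a symmetric irreflexive relation E.\<close>

definition adj_matrix :: "('n::finite \<Rightarrow> 'n \<Rightarrow> bool) \<Rightarrow> real^'n^'n" where
  "adj_matrix E = (\<chi> i j. if E i j then 1 else 0)"

definition is_eigenvalue :: "real^'n^'n \<Rightarrow> real \<Rightarrow> bool" where
  "is_eigenvalue A \<mu> \<longleftrightarrow> (\<exists>v. v \<noteq> 0 \<and> A *v v = \<mu> *\<^sub>R v)"

definition lambda_max :: "real^'n^'n \<Rightarrow> real" where
  "lambda_max A = Max {\<mu>. is_eigenvalue A \<mu>}"

definition lambda_min :: "real^'n^'n \<Rightarrow> real" where
  "lambda_min A = Min {\<mu>. is_eigenvalue A \<mu>}"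

definition eigenspace :: "real^'n^'n \<Rightarrow> real \<Rightarrow> (real^'n) set" where
  "eigenspace A \<mu> = {v. A *v v = \<mu> *\<^sub>R v}"

definition orth_proj :: "'a::real_inner set \<Rightarrow> 'a \<Rightarrow> 'a" where
  "orth_proj S x = (THE w. w \<in> S \<and> (\<forall>u\<in>S. inner (x - w) u = 0))"

definition lovasz_theta :: "('n::finite \<Rightarrow> 'n \<Rightarrow> bool) \<Rightarrow> real" where
  "lovasz_theta E = Inf (lambda_max ` {B :: real^'n^'n. transpose B = B \<and>
      (\<forall>i j. (i = j \<or> \<not> E i j) \<longrightarrow> B $ i $ j = 1)})"

end

theory Submission
  imports Defs
begin

(*
  Take B = J - t A, with J the all-ones matrix and a weight t >= 0.  B is symmetric with
  B_ij = 1 on the diagonal and at non-edges, so theta(G) <= lambda_max(B).  Split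
  x = x1 + x2 with x1 in the lambda_1-eigenspace of A and x2 orthogonal to it, and let
  c = |x1|, s = |x2|.  Cauchy-Schwarz on both parts gives |<1,x>| <= sqrt p c + sqrt (n - p) s,
  and x^T A x >= lambda_1 c^2 + lambda_n s^2, so x^T B x is bounded by a quadratic form in
  (c, s) alone.  With r = sqrt (lambda_1 (n - p) / (-lambda_n p)), T the claimed bound and
  t = (p (1 + r) - T) / lambda_1, that form is at most T (c^2 + s^2), and the hypothesis on p
  is what makes t >= 0.  Finally p > 0 because the entrywise absolute value of a top
  eigenvector of a nonnegative symmetric matrix is again a top eigenvector.
*)

lemma symmetric_matrix_inner_commute:
  fixes B :: "real^'n^'n"
  assumes "transpose B = B"
  shows "inner (B *v x) y = inner x (B *v y)"
  by (metis assms dot_lmul_matrix vector_transpose_matrix)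

lemma linear_coeff_zero_if_quadratic_nonpos:
  fixes b c :: real
  assumes "\<And>e. b * e + c * e\<^sup>2 \<le> 0"
  shows "b = 0"
proof (rule ccontr)
  assume "b \<noteq> 0"
  define d where "d = \<bar>c\<bar> + 1"
  have "d > 0" "c \<ge> 1 - d" by (auto simp: d_def)
  have "b\<^sup>2 * (d + c) = d\<^sup>2 * (b * (b / d) + c * (b / d)\<^sup>2)"
    using \<open>d > 0\<close> by (simp add: field_simps power2_eq_square)
  also have "\<dots> \<le> 0" using assms[of "b / d"] by (intro mult_nonneg_nonpos) simp_all
  finally have "b\<^sup>2 * (d + c) \<le> 0" .
  moreover have "b\<^sup>2 * (d + c) > 0"
    using \<open>b \<noteq> 0\<close> \<open>c \<ge> 1 - d\<close> by (intro mult_pos_pos) auto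
  ultimately show False by linarith
qed

lemma quadratic_form_maximizer_is_eigenvector:
  fixes B :: "real^'n^'n"
  assumes sym: "transpose B = B"
    and le: "\<And>x. inner x (B *v x) \<le> M * inner x x"
    and eq: "inner z (B *v z) = M * inner z z"
  shows "B *v z = M *\<^sub>R z"
proof -
  define w where "w = B *v z - M *\<^sub>R z"
  define c where "c = inner w (B *v w) - M * inner w w"
  have w_form: "inner w (B *v z) - M * inner w z = inner w w"
    by (subst (3) w_def) (simp add: inner_diff_right)
  \<comment> \<open>z maximises x \<bullet> B x - M x \<bullet> x, so the first variation along the residual w must vanish\<close>
  have "2 * inner w w * e + c * e\<^sup>2 \<le> 0" for e
  proof -
    have "inner (z + e *\<^sub>R w) (B *v (z + e *\<^sub>R w)) - M * inner (z + e *\<^sub>R w) (z + e *\<^sub>R w)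
        = (inner z (B *v z) - M * inner z z) + 2 * e * (inner w (B *v z) - M * inner w z) + c * e\<^sup>2"
      using symmetric_matrix_inner_commute[OF sym, of w z] inner_commute[of z "B *v w"]
      by (simp add: c_def algebra_simps power2_eq_square inner_commute[of z w])
    then show ?thesis using le[of "z + e *\<^sub>R w"] eq w_form by (simp add: algebra_simps)
  qed
  then have "2 * inner w w = 0" by (rule linear_coeff_zero_if_quadratic_nonpos)
  then show ?thesis by (simp add: w_def)
qed

lemma finite_eigenvalues_symmetric:
  fixes B :: "real^'n^'n"
  assumes sym: "transpose B = B"
  shows "finite {\<mu>. is_eigenvalue B \<mu>}"
proof -
  define S where "S = {\<mu>. is_eigenvalue B \<mu>}"
  have "\<forall>\<mu>\<in>S. \<exists>v. v \<noteq> 0 \<and> B *v v = \<mu> *\<^sub>R v" by (simp add: S_def is_eigenvalue_def)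
  then obtain f where f: "\<And>\<mu>. \<mu> \<in> S \<Longrightarrow> f \<mu> \<noteq> 0 \<and> B *v f \<mu> = \<mu> *\<^sub>R f \<mu>"
    by metis
  have inj: "inj_on f S"
  proof (rule inj_onI)
    fix a b assume "a \<in> S" "b \<in> S" "f a = f b"
    then have "a *\<^sub>R f a = b *\<^sub>R f a" and "f a \<noteq> 0" using f by metis+
    then show "a = b" by simp
  qed
  have "orthogonal (f a) (f b)" if "a \<in> S" "b \<in> S" "a \<noteq> b" for a b
  proof -
    have "a * inner (f a) (f b) = b * inner (f a) (f b)"
      using symmetric_matrix_inner_commute[OF sym, of "f a" "f b"] f[OF that(1)] f[OF that(2)] by simp
    then show ?thesis using that(3) by (simp add: orthogonal_def)
  qed
  then have "pairwise orthogonal (f ` S)"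
    by (auto simp: pairwise_image pairwise_def)
  moreover have "0 \<notin> f ` S" using f by auto
  ultimately have "finite (f ` S)"
    by (intro independent_imp_finite pairwise_orthogonal_independent)
  then show ?thesis using inj finite_imageD unfolding S_def by blast
qed

lemma lambda_max_eqI:
  fixes B :: "real^'n^'n"
  assumes sym: "transpose B = B" and "is_eigenvalue B M"
    and le: "\<And>x. inner x (B *v x) \<le> M * inner x x"
  shows "lambda_max B = M"
  unfolding lambda_max_def
proof (rule Max_eqI)
  fix \<mu> assume "\<mu> \<in> {\<mu>. is_eigenvalue B \<mu>}"
  then obtain u where "u \<noteq> 0" "B *v u = \<mu> *\<^sub>R u" by (auto simp: is_eigenvalue_def)
  then show "\<mu> \<le> M" using le[of u] by simp
qed (use assms finite_eigenvalues_symmetric in auto)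

lemma lambda_min_eqI:
  fixes B :: "real^'n^'n"
  assumes sym: "transpose B = B" and "is_eigenvalue B m"
    and ge: "\<And>x. m * inner x x \<le> inner x (B *v x)"
  shows "lambda_min B = m"
  unfolding lambda_min_def
proof (rule Min_eqI)
  fix \<mu> assume "\<mu> \<in> {\<mu>. is_eigenvalue B \<mu>}"
  then obtain u where "u \<noteq> 0" "B *v u = \<mu> *\<^sub>R u" by (auto simp: is_eigenvalue_def)
  then show "m \<le> \<mu>" using ge[of u] by simp
qed (use assms finite_eigenvalues_symmetric in auto)

lemma symmetric_rayleigh_max_attained:
  fixes B :: "real^'n^'n"
  assumes sym: "transpose B = B"
  obtains M where "is_eigenvalue B M" and "\<And>x. inner x (B *v x) \<le> M * inner x x"
proof -
  define f where "f x = inner x (B *v x)" for x :: "real^'n"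
  have "axis undefined 1 \<in> sphere (0::real^'n) 1" by simp
  then have "sphere (0::real^'n) 1 \<noteq> {}" by blast
  moreover have "continuous_on (sphere 0 1) f"
    unfolding f_def by (intro continuous_intros)
  ultimately obtain v where v: "v \<in> sphere 0 1" and v_max: "\<And>y. y \<in> sphere 0 1 \<Longrightarrow> f y \<le> f v"
    using continuous_attains_sup[OF compact_sphere] by blast
  have le: "f x \<le> f v * inner x x" for x
  proof (cases "x = 0")
    case False
    have "f x = (norm x)\<^sup>2 * f (x /\<^sub>R norm x)"
      using False by (simp add: f_def matrix_vector_mult_scaleR power2_eq_square field_simps)
    also have "\<dots> \<le> (norm x)\<^sup>2 * f v"
      using False by (intro mult_left_mono v_max) auto
    finally show ?thesis by (simp add: power2_norm_eq_inner mult.commute)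
  qed (simp add: f_def)
  have "inner v v = 1" using v by (simp add: norm_eq_1)
  then have "B *v v = f v *\<^sub>R v"
    using le by (intro quadratic_form_maximizer_is_eigenvector[OF sym]) (auto simp: f_def)
  then have "is_eigenvalue B (f v)"
    using v unfolding is_eigenvalue_def by (intro exI[of _ v]) auto
  then show thesis using le that unfolding f_def by blast
qed

lemma lambda_max_symmetric:
  fixes B :: "real^'n^'n"
  assumes "transpose B = B"
  shows is_eigenvalue_lambda_max: "is_eigenvalue B (lambda_max B)"
    and rayleigh_le_lambda_max: "inner x (B *v x) \<le> lambda_max B * inner x x"
proof -
  obtain M where "is_eigenvalue B M" and "\<And>x. inner x (B *v x) \<le> M * inner x x"
    using symmetric_rayleigh_max_attained[OF assms] by blast
  moreover from this have "lambda_max B = M" by (rule lambda_max_eqI[OF assms])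
  ultimately show "is_eigenvalue B (lambda_max B)" "inner x (B *v x) \<le> lambda_max B * inner x x"
    by simp_all
qed

lemma lambda_min_le_rayleigh:
  fixes B :: "real^'n^'n"
  assumes sym: "transpose B = B"
  shows "lambda_min B * inner x x \<le> inner x (B *v x)"
proof -
  have neg_sym: "transpose (- B) = - B" using sym by (simp add: transpose_def vec_eq_iff)
  have neg_mult: "(- B) *v y = - (B *v y)" for y
    by (simp add: vec_eq_iff matrix_vector_mult_def sum_negf)
  obtain M where "is_eigenvalue (- B) M" and le: "\<And>y. inner y ((- B) *v y) \<le> M * inner y y"
    using symmetric_rayleigh_max_attained[OF neg_sym] by blast
  then have "is_eigenvalue B (- M)"
    unfolding is_eigenvalue_def neg_mult by (metis minus_minus scaleR_minus_left)
  moreover have ge: "- M * inner y y \<le> inner y (B *v y)" for y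
    using le[of y] unfolding neg_mult by simp
  ultimately have "lambda_min B = - M" by (rule lambda_min_eqI[OF sym])
  then show ?thesis using ge by simp
qed

lemma lambda_max_leI:
  fixes B :: "real^'n^'n"
  assumes sym: "transpose B = B" and le: "\<And>x. inner x (B *v x) \<le> T * inner x x"
  shows "lambda_max B \<le> T"
proof -
  obtain v where "v \<noteq> 0" "B *v v = lambda_max B *\<^sub>R v"
    using is_eigenvalue_lambda_max[OF sym] by (auto simp: is_eigenvalue_def)
  then show ?thesis using le[of v] by simp
qed

lemma orth_proj:
  fixes S :: "'a::euclidean_space set"
  assumes "subspace S"
  shows orth_proj_in: "orth_proj S x \<in> S"
    and orth_proj_orthogonal: "u \<in> S \<Longrightarrow> inner (x - orth_proj S x) u = 0"
proof -
  have span_S: "span S = S" using assms by simp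
  obtain y z where "y \<in> span S" "\<And>w. w \<in> span S \<Longrightarrow> orthogonal z w" "x = y + z"
    using orthogonal_subspace_decomp_exists[of S x] by blast
  then have y: "y \<in> S \<and> (\<forall>u\<in>S. inner (x - y) u = 0)"
    unfolding span_S by (auto simp: orthogonal_def)
  have uniq: "w = y" if w: "w \<in> S \<and> (\<forall>u\<in>S. inner (x - w) u = 0)" for w
  proof -
    have "w - y \<in> S" using w y assms by (simp add: subspace_diff)
    then have "inner (x - y) (w - y) - inner (x - w) (w - y) = 0" using w y by simp
    then have "inner (w - y) (w - y) = 0" by (simp only: inner_diff_left[symmetric]) simp
    then show ?thesis by simp
  qed
  have "orth_proj S x = y"
    unfolding orth_proj_def
    by (rule the_equality[where P = "\<lambda>w. w \<in> S \<and> (\<forall>u\<in>S. inner (x - w) u = 0)", OF y uniq])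
  then show "orth_proj S x \<in> S" "u \<in> S \<Longrightarrow> inner (x - orth_proj S x) u = 0"
    using y by auto
qed

lemma inner_orth_proj_split:
  fixes S :: "'a::euclidean_space set"
  assumes "subspace S"
  shows "inner y x = inner (orth_proj S y) (orth_proj S x)
                     + inner (y - orth_proj S y) (x - orth_proj S x)"
proof -
  have "inner (orth_proj S y) (x - orth_proj S x) = 0"
    using orth_proj_orthogonal[OF assms orth_proj_in[OF assms]] by (simp add: inner_commute)
  moreover have "inner (y - orth_proj S y) (orth_proj S x) = 0"
    using orth_proj_orthogonal[OF assms orth_proj_in[OF assms]] by simp
  ultimately show ?thesis by (simp add: algebra_simps)
qed

lemma abs_inner_le_orth_proj_split:
  fixes S :: "'a::euclidean_space set"
  assumes "subspace S"
  shows "\<bar>inner y x\<bar> \<le> norm (orth_proj S y) * norm (orth_proj S x)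
                        + norm (y - orth_proj S y) * norm (x - orth_proj S x)"
  unfolding inner_orth_proj_split[OF assms, of y x]
  by (intro abs_triangle_ineq[THEN order_trans] add_mono Cauchy_Schwarz_ineq2)

lemma norm_orth_proj_split:
  fixes S :: "'a::euclidean_space set"
  assumes "subspace S"
  shows "inner x x = (norm (orth_proj S x))\<^sup>2 + (norm (x - orth_proj S x))\<^sup>2"
  using inner_orth_proj_split[OF assms, of x x] by (simp add: power2_norm_eq_inner)

lemma inner_orth_proj_self:
  fixes S :: "'a::euclidean_space set"
  assumes "subspace S"
  shows "inner x (orth_proj S x) = (norm (orth_proj S x))\<^sup>2"
proof -
  have "inner (x - orth_proj S x) (orth_proj S x) = 0"
    by (rule orth_proj_orthogonal[OF assms orth_proj_in[OF assms]])
  then show ?thesis by (simp add: inner_diff_left power2_norm_eq_inner)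
qed

lemma inner_orth_proj_le:
  fixes S :: "'a::euclidean_space set"
  assumes "subspace S"
  shows "inner x (orth_proj S x) \<le> inner x x"
  unfolding norm_orth_proj_split[OF assms, of x] inner_orth_proj_self[OF assms] by simp

lemma subspace_eigenspace: "subspace (eigenspace A \<mu>)"
  unfolding subspace_def eigenspace_def
  by (simp add: matrix_vector_right_distrib scaleR_add_right matrix_vector_mult_scaleR)

lemma rayleigh_ge_top_eigenspace_split:
  fixes A :: "real^'n^'n"
  assumes sym: "transpose A = A"
  defines "P \<equiv> orth_proj (eigenspace A (lambda_max A))"
  shows "lambda_max A * (norm (P x))\<^sup>2 + lambda_min A * (norm (x - P x))\<^sup>2 \<le> inner x (A *v x)"
proof -
  define x1 x2 where "x1 = P x" and "x2 = x - P x"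
  have eig: "A *v x1 = lambda_max A *\<^sub>R x1"
    using orth_proj_in[OF subspace_eigenspace] unfolding x1_def P_def eigenspace_def by blast
  have orth: "inner x2 x1 = 0"
    using orth_proj_orthogonal[OF subspace_eigenspace orth_proj_in[OF subspace_eigenspace]]
    unfolding x1_def x2_def P_def .
  have "inner x (A *v x) = inner (x1 + x2) (A *v (x1 + x2))" by (simp add: x1_def x2_def)
  also have "\<dots> = lambda_max A * (norm x1)\<^sup>2 + inner x2 (A *v x2)"
    using symmetric_matrix_inner_commute[OF sym, of x1 x2] eig orth
    by (simp add: matrix_vector_right_distrib inner_add_left inner_add_right inner_commute[of x1 x2]
        power2_norm_eq_inner)
  finally show ?thesis
    using lambda_min_le_rayleigh[OF sym, of x2] unfolding x1_def x2_def
    by (simp add: power2_norm_eq_inner)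
qed

lemma all_ones_mult: "((\<chi> i j. 1) :: real^'n^'n) *v x = inner (vec 1) x *\<^sub>R vec 1"
  by (simp add: vec_eq_iff matrix_vector_mult_def inner_vec_def)

lemma lambda_max_all_ones_minus_le:
  fixes A :: "real^'n^'n"
  assumes sym: "transpose A = A" and "0 \<le> t"
  defines "P \<equiv> orth_proj (eigenspace A (lambda_max A))"
  assumes two_block: "\<And>c s. 0 \<le> c \<Longrightarrow> 0 \<le> s \<Longrightarrow>
      (norm (P (vec 1)) * c + norm (vec 1 - P (vec 1)) * s)\<^sup>2
        - t * (lambda_max A * c\<^sup>2 + lambda_min A * s\<^sup>2) \<le> T * (c\<^sup>2 + s\<^sup>2)"
  shows "lambda_max ((\<chi> i j. 1) - t *\<^sub>R A) \<le> T"
proof (rule lambda_max_leI)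
  show "transpose ((\<chi> i j. 1) - t *\<^sub>R A) = (\<chi> i j. 1) - t *\<^sub>R A"
    using sym by (simp add: transpose_def vec_eq_iff)
  fix x :: "real^'n"
  define c s where "c = norm (P x)" and "s = norm (x - P x)"
  define R where "R = norm (P (vec 1)) * c + norm (vec 1 - P (vec 1)) * s"
  have "\<bar>inner (vec 1) x\<bar> \<le> R"
    unfolding R_def c_def s_def P_def by (rule abs_inner_le_orth_proj_split[OF subspace_eigenspace])
  then have "(inner (vec 1) x)\<^sup>2 \<le> R\<^sup>2"
    by (metis abs_ge_zero power2_abs power_mono)
  moreover have "t * (lambda_max A * c\<^sup>2 + lambda_min A * s\<^sup>2) \<le> t * inner x (A *v x)"
    unfolding c_def s_def P_def
    by (intro mult_left_mono rayleigh_ge_top_eigenspace_split[OF sym] \<open>0 \<le> t\<close>)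
  moreover have "inner x x = c\<^sup>2 + s\<^sup>2"
    unfolding c_def s_def P_def by (rule norm_orth_proj_split[OF subspace_eigenspace])
  moreover have "inner x (((\<chi> i j. 1) - t *\<^sub>R A) *v x) = (inner (vec 1) x)\<^sup>2 - t * inner x (A *v x)"
    by (simp add: matrix_vector_mult_diff_rdistrib all_ones_mult scaleR_matrix_vector_assoc[symmetric]
        inner_diff_right power2_eq_square inner_commute)
  ultimately show "inner x (((\<chi> i j. 1) - t *\<^sub>R A) *v x) \<le> T * inner x x"
    using two_block[of c s] by (simp add: R_def c_def s_def)
qed

lemma quadratic_form_sum:
  fixes M :: "real^'n^'n"
  shows "inner x (M *v x) = (\<Sum>i\<in>UNIV. \<Sum>j\<in>UNIV. x $ i * M $ i $ j * x $ j)"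
  by (simp add: inner_vec_def matrix_vector_mult_def sum_distrib_left mult.assoc)

lemma top_eigenspace_nonneg_vector:
  fixes A :: "real^'n^'n"
  assumes sym: "transpose A = A" and nonneg: "\<And>i j. 0 \<le> A $ i $ j"
  obtains u where "u \<in> eigenspace A (lambda_max A)" "u \<noteq> 0" "\<And>i. 0 \<le> u $ i"
proof -
  obtain v where v: "v \<noteq> 0" "A *v v = lambda_max A *\<^sub>R v"
    using is_eigenvalue_lambda_max[OF sym] by (auto simp: is_eigenvalue_def)
  define u where "u = (\<chi> k. \<bar>v $ k\<bar>)"
  have uu: "inner u u = inner v v"
    by (simp add: u_def inner_vec_def)
  have "inner v (A *v v) \<le> inner u (A *v u)"
    unfolding quadratic_form_sum
  proof (intro sum_mono)
    fix i j
    have "v $ i * A $ i $ j * v $ j \<le> \<bar>v $ i * A $ i $ j * v $ j\<bar>" by (rule abs_ge_self)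
    also have "\<dots> = u $ i * A $ i $ j * u $ j" using nonneg[of i j] by (simp add: u_def abs_mult)
    finally show "v $ i * A $ i $ j * v $ j \<le> u $ i * A $ i $ j * u $ j" .
  qed
  then have "inner u (A *v u) = lambda_max A * inner u u"
    using v(2) uu rayleigh_le_lambda_max[OF sym, of u] by (simp add: order_antisym)
  then have "A *v u = lambda_max A *\<^sub>R u"
    by (intro quadratic_form_maximizer_is_eigenvector[OF sym] rayleigh_le_lambda_max[OF sym])
  moreover have "u \<noteq> 0" using uu v(1) by auto
  ultimately show thesis by (intro that) (auto simp: eigenspace_def u_def)
qed

lemma inner_one_orth_proj_top_eigenspace_pos:
  fixes A :: "real^'n^'n"
  assumes sym: "transpose A = A" and nonneg: "\<And>i j. 0 \<le> A $ i $ j"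
  defines "P \<equiv> orth_proj (eigenspace A (lambda_max A))"
  shows "0 < inner (vec 1) (P (vec 1))"
proof -
  obtain u where u: "u \<in> eigenspace A (lambda_max A)" "u \<noteq> 0" "\<And>i. 0 \<le> u $ i"
    using top_eigenspace_nonneg_vector[OF sym nonneg] by blast
  then obtain k where "u $ k \<noteq> 0" by (auto simp: vec_eq_iff)
  then have "0 < (\<Sum>i\<in>UNIV. u $ i)" using u(3) by (intro sum_pos2[of UNIV k]) (auto simp: order_le_neq_trans)
  also have "\<dots> = inner (vec 1) u" by (simp add: inner_vec_def)
  also have "\<dots> = inner (P (vec 1)) u"
    using orth_proj_orthogonal[OF subspace_eigenspace u(1), of "vec 1"] by (simp add: P_def inner_diff_left)
  finally have "P (vec 1) \<noteq> 0" by auto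
  then show ?thesis unfolding P_def inner_orth_proj_self[OF subspace_eigenspace] by simp
qed

lemma two_block_weight_nonneg:
  fixes p q L \<mu> :: real
  assumes pos: "0 < p" "0 \<le> q" "0 < L" "0 < \<mu>" and cond: "\<mu> * q \<le> L * p"
  defines "r \<equiv> sqrt (L * q / (\<mu> * p))"
  defines "T \<equiv> \<mu> * p * (1 + r)\<^sup>2 / (L + \<mu>)"
  shows "T \<le> p * (1 + r)"
proof -
  have r: "0 \<le> r" "r\<^sup>2 = L * q / (\<mu> * p)" using pos by (simp_all add: r_def)
  have "(\<mu> * r)\<^sup>2 = \<mu>\<^sup>2 * (L * q / (\<mu> * p))" by (simp add: power_mult_distrib r(2))
  also have "\<dots> = L * (\<mu> * q) / p" using pos by (simp add: power2_eq_square)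
  also have "\<dots> \<le> L * (L * p) / p"
    using pos cond by (intro divide_right_mono mult_left_mono) auto
  also have "\<dots> = L\<^sup>2" using pos by (simp add: power2_eq_square)
  finally have "\<mu> * r \<le> L" by (rule power2_le_imp_le) (use pos in simp)
  have "\<mu> * p * (1 + r)\<^sup>2 = p * (1 + r) * (\<mu> * (1 + r))" by (simp add: power2_eq_square)
  also have "\<dots> \<le> p * (1 + r) * (L + \<mu>)"
    using \<open>\<mu> * r \<le> L\<close> pos r by (intro mult_left_mono) (auto simp: algebra_simps)
  finally show ?thesis using pos by (simp add: T_def pos_divide_le_eq)
qed

lemma two_block_form_le:
  fixes p q L \<mu> c s :: real
  assumes pos: "0 < p" "0 \<le> q" "0 < L" "0 < \<mu>"
  defines "r \<equiv> sqrt (L * q / (\<mu> * p))"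
  defines "T \<equiv> \<mu> * p * (1 + r)\<^sup>2 / (L + \<mu>)"
  defines "t \<equiv> (p * (1 + r) - T) / L"
  shows "(sqrt p * c + sqrt q * s)\<^sup>2 - t * (L * c\<^sup>2 - \<mu> * s\<^sup>2) \<le> T * (c\<^sup>2 + s\<^sup>2)"
proof -
  define k where "k = sqrt (\<mu> / L)"
  have k: "0 < k" "\<mu> = L * k\<^sup>2" using pos by (simp_all add: k_def)
  have r: "0 \<le> r" "r\<^sup>2 = L * q / (\<mu> * p)" using pos by (simp_all add: r_def)
  have "q = (k * sqrt p * r)\<^sup>2"
    using r(2) k pos by (simp add: field_simps)
  then have sqrt_q: "sqrt q = k * sqrt p * r" using k r pos by simp
  have "0 < 1 + k\<^sup>2" by (simp add: add_pos_nonneg)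
  have "T = L * (k\<^sup>2 * p * (1 + r)\<^sup>2) / (L * (1 + k\<^sup>2))"
    unfolding T_def k(2) by (simp add: algebra_simps)
  then have T: "T * (1 + k\<^sup>2) = k\<^sup>2 * p * (1 + r)\<^sup>2"
    using pos \<open>0 < 1 + k\<^sup>2\<close> by simp
  have "t * (L * c\<^sup>2 - \<mu> * s\<^sup>2) = (t * L) * (c\<^sup>2 - k\<^sup>2 * s\<^sup>2)"
    unfolding k(2) by (simp add: algebra_simps)
  also have "\<dots> = (p * (1 + r) - T) * (c\<^sup>2 - k\<^sup>2 * s\<^sup>2)" using pos by (simp add: t_def)
  \<comment> \<open>the choice of t makes the slack a perfect square\<close>
  finally have "T * (c\<^sup>2 + s\<^sup>2) - ((sqrt p * c + sqrt q * s)\<^sup>2 - t * (L * c\<^sup>2 - \<mu> * s\<^sup>2))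
      = p * r * (c - k * s)\<^sup>2 + s\<^sup>2 * (T * (1 + k\<^sup>2) - k\<^sup>2 * p * (1 + r)\<^sup>2)"
    unfolding sqrt_q using pos by (simp add: power2_eq_square algebra_simps)
  also have "\<dots> \<ge> 0" using T r pos by simp
  finally show ?thesis by simp
qed

lemma adj_matrix_nth [simp]: "adj_matrix E $ i $ j = (if E i j then 1 else 0)"
  by (simp add: adj_matrix_def)

lemma transpose_adj_matrix:
  assumes "\<forall>i j. E i j \<longleftrightarrow> E j i"
  shows "transpose (adj_matrix E) = adj_matrix E"
  using assms by (simp add: transpose_def vec_eq_iff)

lemma inner_axis_mult_axis:
  fixes M :: "real^'n^'m"
  shows "inner (axis i a) (M *v axis j b) = a * M $ i $ j * b"
proof -
  have "(M *v axis j b) $ i = M $ i $ j * b"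
    by (simp add: matrix_vector_mult_def axis_def if_distrib[of "\<lambda>z. M $ i $ _ * z"] cong: if_cong)
  then show ?thesis by (simp add: inner_axis')
qed

lemma adj_matrix_edge_rayleigh:
  assumes sym: "\<forall>i j. E i j \<longleftrightarrow> E j i" and irrefl: "\<forall>i. \<not> E i i" and "E i j"
  shows "inner (axis i 1 + axis j s) (adj_matrix E *v (axis i 1 + axis j s)) = 2 * s"
    and "inner (axis i 1 + axis j s) (axis i 1 + axis j s :: real^'n) = 1 + s\<^sup>2"
proof -
  have "i \<noteq> j" using assms by blast
  then show "inner (axis i 1 + axis j s) (axis i 1 + axis j s :: real^'n) = 1 + s\<^sup>2"
    by (simp add: inner_add_left inner_add_right inner_axis_axis power2_eq_square)
  show "inner (axis i 1 + axis j s) (adj_matrix E *v (axis i 1 + axis j s)) = 2 * s"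
    using assms by (simp add: matrix_vector_right_distrib inner_add_left inner_add_right inner_axis_mult_axis)
qed

lemma adj_matrix_extreme_eigenvalues:
  fixes E :: "'n::finite \<Rightarrow> 'n \<Rightarrow> bool"
  assumes sym: "\<forall>i j. E i j \<longleftrightarrow> E j i" and irrefl: "\<forall>i. \<not> E i i" and "E i j"
  shows "1 \<le> lambda_max (adj_matrix E)" and "lambda_min (adj_matrix E) \<le> -1"
proof -
  note form = adj_matrix_edge_rayleigh[OF assms]
  have "2 * 1 \<le> lambda_max (adj_matrix E) * (1 + 1\<^sup>2)"
    using rayleigh_le_lambda_max[OF transpose_adj_matrix[OF sym]] unfolding form[symmetric] by blast
  then show "1 \<le> lambda_max (adj_matrix E)" by simp
  have "lambda_min (adj_matrix E) * (1 + (-1)\<^sup>2) \<le> 2 * -1"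
    using lambda_min_le_rayleigh[OF transpose_adj_matrix[OF sym]] unfolding form[symmetric] by blast
  then show "lambda_min (adj_matrix E) \<le> -1" by simp
qed

lemma lovasz_theta_le_lambda_max:
  fixes B :: "real^'n^'n"
  assumes "transpose B = B" and "\<forall>i j. (i = j \<or> \<not> E i j) \<longrightarrow> B $ i $ j = 1"
  shows "lovasz_theta E \<le> lambda_max B"
proof -
  let ?F = "{B :: real^'n^'n. transpose B = B \<and> (\<forall>i j. (i = j \<or> \<not> E i j) \<longrightarrow> B $ i $ j = 1)}"
  have "1 \<le> lambda_max B'" if "B' \<in> ?F" for B'
    using that rayleigh_le_lambda_max[of B' "axis undefined 1"]
    by (simp add: inner_axis_mult_axis inner_axis_axis)
  then have "bdd_below (lambda_max ` ?F)" by (rule bdd_belowI2)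
  then show ?thesis
    unfolding lovasz_theta_def using assms by (intro cInf_lower) auto
qed

lemma exists_lambda_max_all_ones_minus_le:
  fixes A :: "real^'n^'n"
  defines "L \<equiv> lambda_max A" and "\<mu> \<equiv> - lambda_min A" and "n \<equiv> real CARD('n)"
  defines "P \<equiv> orth_proj (eigenspace A L)"
  defines "p \<equiv> inner (vec 1) (P (vec 1))"
  assumes sym: "transpose A = A" and "0 < L" "0 < \<mu>" "0 < p" "\<mu> * (n - p) \<le> L * p"
  shows "\<exists>t. lambda_max ((\<chi> i j. 1) - t *\<^sub>R A)
               \<le> \<mu> * p * (1 + sqrt (L * (n - p) / (\<mu> * p)))\<^sup>2 / (L + \<mu>)"
proof -
  define q where "q = n - p"
  define r where "r = sqrt (L * q / (\<mu> * p))"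
  define T where "T = \<mu> * p * (1 + r)\<^sup>2 / (L + \<mu>)"
  define t where "t = (p * (1 + r) - T) / L"
  have "0 \<le> q"
    using inner_orth_proj_le[OF subspace_eigenspace, of "vec 1 :: real^'n"]
    by (simp add: q_def p_def P_def n_def inner_vec_def)
  then have "0 \<le> t"
    using two_block_weight_nonneg[of p q L \<mu>] assms by (simp add: t_def T_def r_def q_def)
  have "lambda_max ((\<chi> i j. 1) - t *\<^sub>R A) \<le> T"
  proof (rule lambda_max_all_ones_minus_le[OF sym \<open>0 \<le> t\<close>], unfold L_def[symmetric] P_def[symmetric])
    fix c s :: real
    have "norm (P (vec 1)) = sqrt p" "norm (vec 1 - P (vec 1)) = sqrt q"
      using inner_orth_proj_self[OF subspace_eigenspace, of "vec 1 :: real^'n" A L]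
        norm_orth_proj_split[OF subspace_eigenspace, of "vec 1 :: real^'n" A L]
      by (simp_all add: p_def q_def P_def n_def inner_vec_def)
    then show "(norm (P (vec 1)) * c + norm (vec 1 - P (vec 1)) * s)\<^sup>2
        - t * (L * c\<^sup>2 + lambda_min A * s\<^sup>2) \<le> T * (c\<^sup>2 + s\<^sup>2)"
      using two_block_form_le[of p q L \<mu> c s] assms \<open>0 \<le> q\<close>
      by (simp add: t_def T_def r_def \<mu>_def)
  qed
  then show ?thesis by (auto simp: T_def r_def q_def)
qed

theorem corollary2:
  fixes E :: "'n::finite \<Rightarrow> 'n \<Rightarrow> bool"
  assumes sym: "\<forall>i j. E i j \<longleftrightarrow> E j i"
    and irrefl: "\<forall>i. \<not> E i i"
    and edge: "\<exists>i j. E i j"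
    and cond: "- lambda_min (adj_matrix E) * (real CARD('n)
                 - inner (vec 1) (orth_proj (eigenspace (adj_matrix E) (lambda_max (adj_matrix E))) (vec 1)))
               / (lambda_max (adj_matrix E)
                 * inner (vec 1) (orth_proj (eigenspace (adj_matrix E) (lambda_max (adj_matrix E))) (vec 1)))
               \<le> 1"
  shows "let A = adj_matrix E; l1 = lambda_max A; ln = lambda_min A; n = real CARD('n);
             p = inner (vec 1 :: real^'n) (orth_proj (eigenspace A l1) (vec 1))
         in lovasz_theta E \<le> (- n * ln / (l1 - ln)) * (p / n)
              * (1 + sqrt (l1 * (n - p) / (- ln * p)))\<^sup>2"
proof -
  let ?A = "adj_matrix E"
  let ?L = "lambda_max ?A" and ?\<mu> = "- lambda_min ?A" and ?n = "real CARD('n)"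
  let ?p = "inner (vec 1 :: real^'n) (orth_proj (eigenspace ?A ?L) (vec 1))"
  have symA: "transpose ?A = ?A" using sym by (rule transpose_adj_matrix)
  obtain i j where "E i j" using edge by blast
  then have "1 \<le> ?L" "1 \<le> ?\<mu>" using adj_matrix_extreme_eigenvalues[OF sym irrefl] by auto
  moreover have "0 < ?p" using inner_one_orth_proj_top_eigenspace_pos[OF symA] by simp
  moreover from this \<open>1 \<le> ?L\<close> have "?\<mu> * (?n - ?p) \<le> ?L * ?p"
    using cond by (subst (asm) pos_divide_le_eq) auto
  ultimately obtain t where "lambda_max ((\<chi> i j. 1) - t *\<^sub>R ?A)
      \<le> ?\<mu> * ?p * (1 + sqrt (?L * (?n - ?p) / (?\<mu> * ?p)))\<^sup>2 / (?L + ?\<mu>)"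
    using exists_lambda_max_all_ones_minus_le[OF symA] by auto
  moreover have "lovasz_theta E \<le> lambda_max ((\<chi> i j. 1) - t *\<^sub>R ?A)"
    using sym irrefl by (intro lovasz_theta_le_lambda_max) (auto simp: transpose_def vec_eq_iff)
  moreover have "?n > 0" by simp
  ultimately show ?thesis by (simp add: Let_def field_simps)
qed

end
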